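(* Let $l\ge1$, $L=a^l$ on $\mathcal H=\ell^2(\mathbb N)$ (single jump operator, $H=0$), $Q$ the closure of $L^\dagger L=a^{\dagger l}a^l$, $G=-\tfrac12Q$ and $\Lambda=\mathrm{Id}+a^{l\dagger}a^l$. Then: for every $k\ge0$, $\mathcal H^k=\{\sum_m\psi_m|m\rangle:\sum_m(1+m^{kl})|\psi_m|^2<\infty\}$; $a^{l\dagger}a^l$ with domain $\mathcal H^2$ is self-adjoint; $L\in B(\mathcal H^{m+1},\mathcal H^m)$ for all $m\in\mathbb N$; and for all $u\in\mathcal H^6$, $$2\mathrm{Re}\langle\Lambda^2Gu|\Lambda^2u\rangle+\|\Lambda^2Lu\|^2\le0 .$$ Consequently Assumption A holds with $\gamma=0$.
   Context: $(|m\rangle)_{m\in\mathbb N}$ is the Fock (canonical) basis of $\ell^2(\mathbb N)$, $a|m+1\rangle=\sqrt{m+1}|m\rangle$, $a|0\rangle=0$, $a^\dagger|m\rangle=\sqrt{m+1}|m+1\rangle$. For $\Lambda\ge\mathrm{Id}$ self-adjoint, $\mathcal H^n=\mathcal D(\Lambda^{n/2})$ with norm $\|\Lambda^{n/2}u\|$, $B(\mathcal H^m,\mathcal H^n)$ the bounded operators between them. Assumption A (no Hamiltonian): jump operators $L_j$ closed; $\bigcap_j\mathcal D(L_j^\dagger L_j)$ dense and $\sum_jL_j^\dagger L_j$ essentially self-adjoint on it with closure $Q$; $G=-\tfrac12Q$; $\Lambda=Q+\mathrm{Id}$; $L_j\in B(\mathcal H^5,\mathcal H^4)$; and there is $\gamma\ge0$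 with $2\mathrm{Re}\langle\Lambda^2Gu|\Lambda^2u\rangle+\sum_j\|\Lambda^2L_ju\|^2\le\gamma\|\Lambda^2u\|^2$ for all $u\in\mathcal H^6$. *)

theory Defs
  imports "HOL-Analysis.Analysis"
begin

text \<open>A vector of l2(N) is represented by its coefficient sequence in the Fock
basis: u = sum_m u(m) |m>.\<close>

type_synonym vec = "nat \<Rightarrow> complex"

type_synonym op = "vec set \<times> (vec \<Rightarrow> vec)"

abbreviation op_dom :: "op \<Rightarrow> vec set" where "op_dom T \<equiv> fst T"
abbreviation op_app :: "op \<Rightarrow> vec \<Rightarrow> vec" where "op_app T \<equiv> snd T"

definition l2 :: "vec set" where
  "l2 = {u. summable (\<lambda>m. (cmod (u m))\<^sup>2)}"

text \<open>Inner product, antilinear in the first argument.\<close>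
definition inner2 :: "vec \<Rightarrow> vec \<Rightarrow> complex" where
  "inner2 u v = (\<Sum>m. cnj (u m) * v m)"

definition nrm :: "vec \<Rightarrow> real" where
  "nrm u = sqrt (\<Sum>m. (cmod (u m))\<^sup>2)"

definition vdiff :: "vec \<Rightarrow> vec \<Rightarrow> vec" where
  "vdiff u v = (\<lambda>m. u m - v m)"

definition l2conv :: "(nat \<Rightarrow> vec) \<Rightarrow> vec \<Rightarrow> bool" where
  "l2conv x u \<longleftrightarrow> u \<in> l2 \<and> (\<forall>k. x k \<in> l2) \<and> (\<lambda>k. nrm (vdiff (x k) u)) \<longlonglongrightarrow> 0"

definition dense_l2 :: "vec set \<Rightarrow> bool" where
  "dense_l2 D \<longleftrightarrow> D \<subseteq> l2 \<and> (\<forall>u\<in>l2. \<exists>x. (\<forall>k. x k \<in> D) \<and> l2conv x u)"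

definition op_id :: op where "op_id = (l2, id)"

definition op_comp :: "op \<Rightarrow> op \<Rightarrow> op" where
  "op_comp S T = ({u \<in> op_dom T. op_app T u \<in> op_dom S}, op_app S \<circ> op_app T)"

primrec opow :: "op \<Rightarrow> nat \<Rightarrow> op" where
  "opow T 0 = op_id"
| "opow T (Suc n) = op_comp T (opow T n)"

definition op_add :: "op \<Rightarrow> op \<Rightarrow> op" where
  "op_add S T = (op_dom S \<inter> op_dom T, \<lambda>u m. op_app S u m + op_app T u m)"

definition op_scale :: "complex \<Rightarrow> op \<Rightarrow> op" where
  "op_scale c T = (op_dom T, \<lambda>u m. c * op_app T u m)"

definition op_sum :: "op list \<Rightarrow> op" where
  "op_sum Ts = (l2 \<inter> (\<Inter>T\<in>set Ts. op_dom T), \<lambda>u m. (\<Sum>T\<leftarrow>Ts. op_app T u m))"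

definition closed_op :: "op \<Rightarrow> bool" where
  "closed_op T \<longleftrightarrow> op_dom T \<subseteq> l2 \<and>
     (\<forall>x u w. (\<forall>k. x k \<in> op_dom T) \<longrightarrow> l2conv x u \<longrightarrow> l2conv (\<lambda>k. op_app T (x k)) w
        \<longrightarrow> u \<in> op_dom T \<and> op_app T u = w)"

text \<open>Closure of an operator (via the closure of its graph).\<close>
definition op_closure :: "op \<Rightarrow> op" where
  "op_closure T =
    ({u. \<exists>x w. (\<forall>k. x k \<in> op_dom T) \<and> l2conv x u \<and> l2conv (\<lambda>k. op_app T (x k)) w},
     \<lambda>u. THE w. \<exists>x. (\<forall>k. x k \<in> op_dom T) \<and> l2conv x u \<and> l2conv (\<lambda>k. op_app T (x k)) w)"

definition adjoint :: "op \<Rightarrow> op" where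
  "adjoint T =
    ({v \<in> l2. \<exists>w\<in>l2. \<forall>u\<in>op_dom T. inner2 (op_app T u) v = inner2 u w},
     \<lambda>v. THE w. w \<in> l2 \<and> (\<forall>u\<in>op_dom T. inner2 (op_app T u) v = inner2 u w))"

definition op_eq :: "op \<Rightarrow> op \<Rightarrow> bool" where
  "op_eq S T \<longleftrightarrow> op_dom S = op_dom T \<and> (\<forall>u\<in>op_dom S. op_app S u = op_app T u)"

definition selfadjoint :: "op \<Rightarrow> bool" where
  "selfadjoint T \<longleftrightarrow> dense_l2 (op_dom T) \<and> op_eq (adjoint T) T"

definition ess_selfadjoint :: "op \<Rightarrow> bool" where
  "ess_selfadjoint T \<longleftrightarrow> dense_l2 (op_dom T) \<and> selfadjoint (op_closure T)"

definition ann :: op where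
  "ann = ({u \<in> l2. (\<lambda>m. complex_of_real (sqrt (real m + 1)) * u (Suc m)) \<in> l2},
          \<lambda>u m. complex_of_real (sqrt (real m + 1)) * u (Suc m))"

definition cre :: op where
  "cre = ({u \<in> l2. (\<lambda>m. if m = 0 then 0 else complex_of_real (sqrt (real m)) * u (m - 1)) \<in> l2},
          \<lambda>u m. if m = 0 then 0 else complex_of_real (sqrt (real m)) * u (m - 1))"

section \<open>Fractional scale H^n = D(Lambda^(n/2)) for Lambda >= Id self-adjoint\<close>

text \<open>D(A^(1/2)) is the closure of D(A) for the form norm u \<mapsto> sqrt(Re <Au|u>),
  and ||A^(1/2) u|| is the limit of the form norms along approximating sequences.\<close>

definition form_approx :: "op \<Rightarrow> (nat \<Rightarrow> vec) \<Rightarrow> vec \<Rightarrow> bool" where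
  "form_approx A x u \<longleftrightarrow> (\<forall>k. x k \<in> op_dom A) \<and> l2conv x u \<and>
     (\<forall>e>0. \<exists>N. \<forall>i\<ge>N. \<forall>j\<ge>N.
        Re (inner2 (op_app A (vdiff (x i) (x j))) (vdiff (x i) (x j))) < e\<^sup>2)"

definition formdom :: "op \<Rightarrow> vec set" where
  "formdom A = {u. \<exists>x. form_approx A x u}"

definition formnorm :: "op \<Rightarrow> vec \<Rightarrow> real" where
  "formnorm A u = (THE r. \<forall>x. form_approx A x u \<longrightarrow>
      (\<lambda>k. sqrt (Re (inner2 (op_app A (x k)) (x k)))) \<longlonglongrightarrow> r)"

definition hdom :: "op \<Rightarrow> nat \<Rightarrow> vec set" where
  "hdom A n = (if even n then op_dom (opow A (n div 2))
     else {u \<in> op_dom (opow A (n div 2)). op_app (opow A (n div 2)) u \<in> formdom A})"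

definition hnorm :: "op \<Rightarrow> nat \<Rightarrow> vec \<Rightarrow> real" where
  "hnorm A n u = (if even n then nrm (op_app (opow A (n div 2)) u)
     else formnorm A (op_app (opow A (n div 2)) u))"

definition bounded_between :: "op \<Rightarrow> nat \<Rightarrow> nat \<Rightarrow> op \<Rightarrow> bool" where
  "bounded_between A m n T \<longleftrightarrow> hdom A m \<subseteq> op_dom T \<and>
     (\<forall>u\<in>hdom A m. op_app T u \<in> hdom A n) \<and>
     (\<exists>C. \<forall>u\<in>hdom A m. hnorm A n (op_app T u) \<le> C * hnorm A m u)"

section \<open>Assumption A (no Hamiltonian), for a finite family of jump operators\<close>

definition assumptionA :: "op list \<Rightarrow> real \<Rightarrow> bool" where
  "assumptionA Ls \<gamma> \<longleftrightarrow>
    (let LL = op_sum (map (\<lambda>L. op_comp (adjoint L) L) Ls);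
         Q = op_closure LL;
         G = op_scale (-1/2) Q;
         Lam = op_add op_id Q
     in (\<forall>L\<in>set Ls. closed_op L) \<and>
        dense_l2 (op_dom LL) \<and>
        ess_selfadjoint LL \<and>
        (\<forall>L\<in>set Ls. bounded_between Lam 5 4 L) \<and>
        \<gamma> \<ge> 0 \<and>
        (\<forall>u\<in>hdom Lam 6.
           2 * Re (inner2 (op_app (opow Lam 2) (op_app G u)) (op_app (opow Lam 2) u))
           + (\<Sum>L\<leftarrow>Ls. (nrm (op_app (opow Lam 2) (op_app L u)))\<^sup>2)
           \<le> \<gamma> * (nrm (op_app (opow Lam 2) u))\<^sup>2))"

end

theory Submission
  imports Defs
begin

text \<open>Everything is diagonal in the Fock basis. Since \<open>a\<^sup>l |n> = sqrt(n(n-1)\<cdots>(n-l+1)) |n-l>\<close>,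
  the operator \<open>a\<^sup>l\<^sup>\<dagger>a\<^sup>l\<close>, its closure \<open>Q\<close> and \<open>\<Lambda> = Id + Q\<close> act by multiplication with
  \<open>q\<^sub>n = n(n-1)\<cdots>(n-l+1)\<close> and \<open>\<lambda>\<^sub>n = 1 + q\<^sub>n\<close>. Hence every space \<open>H\<^sup>k\<close> of the scale is the
  \<open>l\<^sup>2\<close> space with weight \<open>\<lambda>\<^sub>n\<^sup>k\<close>, which is comparable to \<open>1 + n\<^sup>k\<^sup>l\<close>; for odd \<open>k\<close> the form
  domain of \<open>\<Lambda>\<close> is identified by completing the finitely supported vectors in the
  \<open>\<lambda>\<close>-weighted norm. For the dissipation estimate,
  \<open>2 Re\<langle>\<Lambda>\<^sup>2Gu|\<Lambda>\<^sup>2u\<rangle> = -\<Sum>\<^sub>n \<lambda>\<^sub>n\<^sup>4 q\<^sub>n |u\<^sub>n|\<^sup>2\<close>, while \<open>a\<^sup>l\<close> moves the coefficient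
  \<open>u\<^sub>m\<^sub>+\<^sub>l\<close> (with weight \<open>q\<^sub>m\<^sub>+\<^sub>l\<close>) down to index \<open>m\<close>; as \<open>\<lambda>\<close> is increasing,
  \<open>\<parallel>\<Lambda>\<^sup>2a\<^sup>lu\<parallel>\<^sup>2 = \<Sum>\<^sub>m \<lambda>\<^sub>m\<^sup>4 q\<^sub>m\<^sub>+\<^sub>l |u\<^sub>m\<^sub>+\<^sub>l|\<^sup>2 \<le> \<Sum>\<^sub>n \<lambda>\<^sub>n\<^sup>4 q\<^sub>n |u\<^sub>n|\<^sup>2\<close>, so the
  sum is non-positive.\<close>

section \<open>Weighted sequence spaces\<close>

definition weighted_l2 :: "(nat \<Rightarrow> real) \<Rightarrow> vec set" where
  "weighted_l2 w = {u. summable (\<lambda>n. w n * (cmod (u n))\<^sup>2)}"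

definition weighted_sqnorm :: "(nat \<Rightarrow> real) \<Rightarrow> vec \<Rightarrow> real" where
  "weighted_sqnorm w u = (\<Sum>n. w n * (cmod (u n))\<^sup>2)"

definition diag_mult :: "(nat \<Rightarrow> real) \<Rightarrow> vec \<Rightarrow> vec" where
  "diag_mult d u = (\<lambda>n. complex_of_real (d n) * u n)"

definition diag_dom :: "(nat \<Rightarrow> real) \<Rightarrow> vec set" where
  "diag_dom d = {u \<in> l2. diag_mult d u \<in> l2}"

definition trunc :: "nat \<Rightarrow> vec \<Rightarrow> vec" where
  "trunc k u = (\<lambda>n. if n < k then u n else 0)"

definition fock_vec :: "nat \<Rightarrow> vec" where
  "fock_vec k = (\<lambda>n. if n = k then 1 else 0)"

lemma weighted_l2_iff: "u \<in> weighted_l2 w \<longleftrightarrow> summable (\<lambda>n. w n * (cmod (u n))\<^sup>2)"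
  unfolding weighted_l2_def by simp

lemma weighted_l2_one: "weighted_l2 (\<lambda>_. 1) = l2"
  unfolding weighted_l2_def l2_def by simp

lemma cmod_diag_mult_sq: "(cmod (diag_mult d u n))\<^sup>2 = (d n)\<^sup>2 * (cmod (u n))\<^sup>2"
  unfolding diag_mult_def by (simp add: norm_mult power_mult_distrib)

lemma diag_mult_diag_mult: "diag_mult a (diag_mult b u) = diag_mult (\<lambda>n. a n * b n) u"
  unfolding diag_mult_def by (simp add: fun_eq_iff mult.assoc)

lemma diag_mult_in_weighted_l2:
  "diag_mult d u \<in> weighted_l2 w \<longleftrightarrow> u \<in> weighted_l2 (\<lambda>n. w n * (d n)\<^sup>2)"
  unfolding weighted_l2_iff cmod_diag_mult_sq by (simp add: mult.assoc)

lemma diag_mult_in_l2: "diag_mult d u \<in> l2 \<longleftrightarrow> u \<in> weighted_l2 (\<lambda>n. (d n)\<^sup>2)"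
  using diag_mult_in_weighted_l2[of d u "\<lambda>_. 1"] weighted_l2_one by simp

lemma weighted_sqnorm_diag_mult:
  "weighted_sqnorm w (diag_mult d u) = weighted_sqnorm (\<lambda>n. w n * (d n)\<^sup>2) u"
  unfolding weighted_sqnorm_def cmod_diag_mult_sq by (simp add: mult.assoc)

lemma nrm_diag_mult: "nrm (diag_mult d u) = sqrt (weighted_sqnorm (\<lambda>n. (d n)\<^sup>2) u)"
  unfolding nrm_def weighted_sqnorm_def cmod_diag_mult_sq ..

lemma weighted_l2_bound2:
  assumes "\<And>n. 0 \<le> w n" "\<And>n. w n \<le> C * w1 n + D * w2 n"
    and "u \<in> weighted_l2 w1" "u \<in> weighted_l2 w2"
  shows "u \<in> weighted_l2 w"
proof -
  have "summable (\<lambda>n. C * (w1 n * (cmod (u n))\<^sup>2) + D * (w2 n * (cmod (u n))\<^sup>2))"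
    using assms(3,4) unfolding weighted_l2_iff by (intro summable_add summable_mult)
  then show ?thesis unfolding weighted_l2_iff
  proof (rule summable_comparison_test'[where N=0])
    fix n
    have "w n * (cmod (u n))\<^sup>2 \<le> (C * w1 n + D * w2 n) * (cmod (u n))\<^sup>2"
      by (rule mult_right_mono) (use assms(2) in auto)
    then show "norm (w n * (cmod (u n))\<^sup>2)
        \<le> C * (w1 n * (cmod (u n))\<^sup>2) + D * (w2 n * (cmod (u n))\<^sup>2)"
      using assms(1)[of n] by (simp add: algebra_simps)
  qed
qed

lemma weighted_l2_bound:
  assumes "\<And>n. 0 \<le> w n" "\<And>n. w n \<le> C * w' n" "u \<in> weighted_l2 w'"
  shows "u \<in> weighted_l2 w"
  using weighted_l2_bound2[of w C w' 0 w' u] assms by simp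

lemma weighted_l2_add:
  assumes w: "\<And>n. 0 \<le> w n" and "u \<in> weighted_l2 w" "v \<in> weighted_l2 w"
  shows "(\<lambda>n. u n + v n) \<in> weighted_l2 w"
proof -
  have "summable (\<lambda>n. 2 * (w n * (cmod (u n))\<^sup>2) + 2 * (w n * (cmod (v n))\<^sup>2))"
    using assms(2,3) unfolding weighted_l2_iff by (intro summable_add summable_mult)
  then show ?thesis unfolding weighted_l2_iff
  proof (rule summable_comparison_test'[where N=0])
    fix n
    have "(cmod (u n + v n))\<^sup>2 \<le> (cmod (u n) + cmod (v n))\<^sup>2"
      by (intro power_mono norm_triangle_ineq) simp
    also have "\<dots> \<le> 2 * (cmod (u n))\<^sup>2 + 2 * (cmod (v n))\<^sup>2"
      using sum_squares_bound[of "cmod (u n)" "cmod (v n)"] by (simp add: power2_sum)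
    finally have "w n * (cmod (u n + v n))\<^sup>2 \<le> w n * (2 * (cmod (u n))\<^sup>2 + 2 * (cmod (v n))\<^sup>2)"
      by (rule mult_left_mono) (rule w)
    then show "norm (w n * (cmod (u n + v n))\<^sup>2)
        \<le> 2 * (w n * (cmod (u n))\<^sup>2) + 2 * (w n * (cmod (v n))\<^sup>2)"
      using w[of n] by (simp add: algebra_simps)
  qed
qed

lemma weighted_l2_scale: "u \<in> weighted_l2 w \<Longrightarrow> (\<lambda>n. c * u n) \<in> weighted_l2 w"
  unfolding weighted_l2_iff
  by (drule summable_mult[where c="(cmod c)\<^sup>2"]) (simp add: norm_mult power_mult_distrib algebra_simps)

lemma weighted_l2_diff:
  assumes "\<And>n. 0 \<le> w n" "u \<in> weighted_l2 w" "v \<in> weighted_l2 w"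
  shows "vdiff u v \<in> weighted_l2 w"
  using weighted_l2_add[OF assms(1,2) weighted_l2_scale[OF assms(3), of "-1"]]
  by (simp add: vdiff_def)

lemma weighted_sqnorm_vdiff_commute: "weighted_sqnorm w (vdiff u v) = weighted_sqnorm w (vdiff v u)"
  unfolding weighted_sqnorm_def vdiff_def by (simp add: norm_minus_commute)

lemma weighted_l2_finite_support: "(\<And>n. n \<ge> N \<Longrightarrow> u n = 0) \<Longrightarrow> u \<in> weighted_l2 w"
  unfolding weighted_l2_iff by (rule summable_finite[of "{..<N}"]) auto

lemma l2_diff: "u \<in> l2 \<Longrightarrow> v \<in> l2 \<Longrightarrow> vdiff u v \<in> l2"
  using weighted_l2_diff[of "\<lambda>_. 1" u v] weighted_l2_one by simp

lemma l2_finite_support: "(\<And>n. n \<ge> N \<Longrightarrow> u n = 0) \<Longrightarrow> u \<in> l2"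
  using weighted_l2_finite_support[of N u "\<lambda>_. 1"] weighted_l2_one by simp

lemma trunc_in_diag_dom: "trunc k u \<in> diag_dom d"
  unfolding diag_dom_def
  by (auto intro: l2_finite_support[of k] simp: trunc_def diag_mult_def)

lemma fock_vec_in_diag_dom: "fock_vec k \<in> diag_dom d"
  unfolding diag_dom_def
  by (auto intro: l2_finite_support[of "Suc k"] simp: fock_vec_def diag_mult_def)

lemma weighted_sqnorm_nonneg:
  "(\<And>n. 0 \<le> w n) \<Longrightarrow> u \<in> weighted_l2 w \<Longrightarrow> 0 \<le> weighted_sqnorm w u"
  unfolding weighted_sqnorm_def weighted_l2_iff by (rule suminf_nonneg) auto

lemma partial_sum_le_weighted_sqnorm:
  "(\<And>n. 0 \<le> w n) \<Longrightarrow> u \<in> weighted_l2 w \<Longrightarrow>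
    (\<Sum>n<M. w n * (cmod (u n))\<^sup>2) \<le> weighted_sqnorm w u"
  unfolding weighted_sqnorm_def weighted_l2_iff by (rule sum_le_suminf) auto

lemma weighted_sqnorm_le_const:
  assumes "\<And>n. 0 \<le> w n" "\<And>M. (\<Sum>n<M. w n * (cmod (u n))\<^sup>2) \<le> B"
  shows "u \<in> weighted_l2 w" "weighted_sqnorm w u \<le> B"
proof -
  show u: "u \<in> weighted_l2 w" unfolding weighted_l2_iff
    by (rule summableI_nonneg_bounded[where x=B]) (use assms in auto)
  show "weighted_sqnorm w u \<le> B" unfolding weighted_sqnorm_def
    using u unfolding weighted_l2_iff by (rule suminf_le_const) (use assms in auto)
qed

lemma weighted_sqnorm_mono:
  assumes "\<And>n. w n \<le> w' n" "u \<in> weighted_l2 w" "u \<in> weighted_l2 w'"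
  shows "weighted_sqnorm w u \<le> weighted_sqnorm w' u"
  unfolding weighted_sqnorm_def
  by (rule suminf_le) (use assms in \<open>auto simp: weighted_l2_iff intro: mult_right_mono\<close>)

lemma sqrt_weighted_sqnorm_triangle:
  assumes w: "\<And>n. 0 \<le> w n" and a: "a \<in> weighted_l2 w" and b: "b \<in> weighted_l2 w"
  shows "sqrt (weighted_sqnorm w (\<lambda>n. a n + b n))
    \<le> sqrt (weighted_sqnorm w a) + sqrt (weighted_sqnorm w b)"
proof -
  define B where "B = (sqrt (weighted_sqnorm w a) + sqrt (weighted_sqnorm w b))\<^sup>2"
  define L where "L f M = L2_set (\<lambda>n. sqrt (w n) * cmod (f n)) {..<M}" for f M
  have L_eq: "L f M = sqrt (\<Sum>n<M. w n * (cmod (f n))\<^sup>2)" for f M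
    unfolding L_def L2_set_def using w by (simp add: power_mult_distrib)
  have "L (\<lambda>n. a n + b n) M \<le> L2_set (\<lambda>n. sqrt (w n) * cmod (a n) + sqrt (w n) * cmod (b n)) {..<M}"
    for M unfolding L_def
    by (rule L2_set_mono) (use w in \<open>auto simp: distrib_left[symmetric] intro: mult_left_mono norm_triangle_ineq\<close>)
  also have "\<dots> M \<le> L a M + L b M" for M unfolding L_def by (rule L2_set_triangle_ineq)
  also have "L a M + L b M \<le> sqrt (weighted_sqnorm w a) + sqrt (weighted_sqnorm w b)" for M
    unfolding L_eq using partial_sum_le_weighted_sqnorm[OF w a] partial_sum_le_weighted_sqnorm[OF w b]
    by (intro add_mono real_sqrt_le_mono)
  finally have "(\<Sum>n<M. w n * (cmod (a n + b n))\<^sup>2) \<le> B" for M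
    unfolding L_eq B_def by (rule sqrt_le_D)
  then have "weighted_sqnorm w (\<lambda>n. a n + b n) \<le> B"
    by (rule weighted_sqnorm_le_const(2)[OF w])
  then show ?thesis unfolding B_def
    by (simp add: real_sqrt_le_iff weighted_sqnorm_nonneg[OF w a] weighted_sqnorm_nonneg[OF w b]
        real_le_lsqrt)
qed

lemma l2conv_l2: "l2conv x u \<Longrightarrow> u \<in> l2" "l2conv x u \<Longrightarrow> x k \<in> l2"
  unfolding l2conv_def by auto

lemma l2conv_const: "u \<in> l2 \<Longrightarrow> l2conv (\<lambda>k. u) u"
  unfolding l2conv_def nrm_def vdiff_def by simp

lemma cmod_le_nrm:
  assumes "u \<in> l2" shows "cmod (u n) \<le> nrm u"
proof -
  have "(cmod (u n))\<^sup>2 \<le> (\<Sum>m. (cmod (u m))\<^sup>2)"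
    using sum_le_suminf[of "\<lambda>m. (cmod (u m))\<^sup>2" "{n}"] assms unfolding l2_def by auto
  then show ?thesis unfolding nrm_def by (rule real_le_rsqrt)
qed

lemma l2conv_coordinate:
  assumes "l2conv x u" shows "(\<lambda>k. x k n) \<longlonglongrightarrow> u n"
proof -
  have "(\<lambda>k. x k n - u n) \<longlonglongrightarrow> 0"
  proof (rule Lim_null_comparison)
    show "\<forall>\<^sub>F k in sequentially. norm (x k n - u n) \<le> nrm (vdiff (x k) u)"
      using assms cmod_le_nrm[OF l2_diff, of "x _" u n] by (simp add: l2conv_def vdiff_def)
    show "(\<lambda>k. nrm (vdiff (x k) u)) \<longlonglongrightarrow> 0" using assms unfolding l2conv_def by blast
  qed
  then show ?thesis by (simp add: LIM_zero_iff)
qed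

lemma tail_suminf_tendsto_zero:
  fixes f :: "nat \<Rightarrow> real"
  assumes "summable f"
  shows "(\<lambda>k. \<Sum>n. if n < k then 0 else f n) \<longlonglongrightarrow> 0"
proof -
  have "(\<Sum>n. if n < k then 0 else f n) = suminf f - sum f {..<k}" for k
  proof -
    define g where "g n = (if n < k then f n else 0)" for n
    have "summable g" unfolding g_def by (rule summable_finite[of "{..<k}"]) auto
    moreover have "suminf g = sum f {..<k}" unfolding g_def
      by (subst suminf_finite[of "{..<k}"]) auto
    moreover have "(\<lambda>n. if n < k then 0 else f n) = (\<lambda>n. f n - g n)" unfolding g_def by auto
    ultimately show ?thesis using suminf_diff[OF assms] by metis
  qed
  moreover have "(\<lambda>k. suminf f - sum f {..<k}) \<longlonglongrightarrow> suminf f - suminf f"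
    by (intro tendsto_diff tendsto_const summable_LIMSEQ assms)
  ultimately show ?thesis by simp
qed

lemma trunc_l2conv:
  assumes u: "u \<in> l2" shows "l2conv (\<lambda>k. trunc k u) u"
  unfolding l2conv_def
proof (intro conjI allI)
  show "u \<in> l2" by fact
  show "trunc k u \<in> l2" for k
    by (rule l2_finite_support[of k]) (simp add: trunc_def)
  have "nrm (vdiff (trunc k u) u) = sqrt (\<Sum>n. if n < k then 0 else (cmod (u n))\<^sup>2)" for k
    unfolding nrm_def vdiff_def trunc_def by (rule arg_cong[where f=sqrt], rule arg_cong[where f=suminf]) auto
  moreover have "(\<lambda>k. sqrt (\<Sum>n. if n < k then 0 else (cmod (u n))\<^sup>2)) \<longlonglongrightarrow> sqrt 0"
    by (intro tendsto_real_sqrt tail_suminf_tendsto_zero) (use u in \<open>simp add: l2_def\<close>)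
  ultimately show "(\<lambda>k. nrm (vdiff (trunc k u) u)) \<longlonglongrightarrow> 0" by simp
qed

lemma dense_diag_dom: "dense_l2 (diag_dom d)"
  unfolding dense_l2_def
proof (intro conjI ballI)
  show "diag_dom d \<subseteq> l2" unfolding diag_dom_def by blast
  show "\<exists>x. (\<forall>k. x k \<in> diag_dom d) \<and> l2conv x u" if "u \<in> l2" for u
    using trunc_in_diag_dom trunc_l2conv[OF that] by (intro exI[of _ "\<lambda>k. trunc k u"]) simp
qed

lemma l2_inner_summable:
  assumes "u \<in> l2" "v \<in> l2" shows "summable (\<lambda>n. cnj (u n) * v n)"
proof (rule summable_norm_cancel)
  have "summable (\<lambda>n. (cmod (u n))\<^sup>2 + (cmod (v n))\<^sup>2)"
    using assms unfolding l2_def by (simp add: summable_add)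
  then show "summable (\<lambda>n. norm (cnj (u n) * v n))"
  proof (rule summable_comparison_test'[where N=0])
    fix n
    have "2 * (cmod (u n) * cmod (v n)) \<le> (cmod (u n))\<^sup>2 + (cmod (v n))\<^sup>2"
      using sum_squares_bound[of "cmod (u n)" "cmod (v n)"] by (simp add: mult.assoc)
    moreover have "0 \<le> cmod (u n) * cmod (v n)" by simp
    ultimately have "cmod (u n) * cmod (v n) \<le> (cmod (u n))\<^sup>2 + (cmod (v n))\<^sup>2" by linarith
    then show "norm (norm (cnj (u n) * v n)) \<le> (cmod (u n))\<^sup>2 + (cmod (v n))\<^sup>2"
      by (simp add: norm_mult)
  qed
qed

lemma inner2_fock_vec: "inner2 (fock_vec k) w = w k"
proof -
  have "(\<lambda>m. cnj (fock_vec k m) * w m) = (\<lambda>m. if m = k then w m else 0)"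
    unfolding fock_vec_def by auto
  then show ?thesis unfolding inner2_def using sums_unique[OF sums_single[of k w]] by simp
qed

lemma weighted_sqnorm_fatou:
  assumes w: "\<And>n. 0 \<le> w n" and lim: "\<And>n. (\<lambda>j. y j n) \<longlonglongrightarrow> v n"
    and bnd: "\<forall>\<^sub>F j in sequentially. y j \<in> weighted_l2 w \<and> weighted_sqnorm w (y j) \<le> B"
  shows "v \<in> weighted_l2 w" "weighted_sqnorm w v \<le> B"
proof -
  have "(\<Sum>n<M. w n * (cmod (v n))\<^sup>2) \<le> B" for M
  proof (rule tendsto_le[OF sequentially_bot tendsto_const])
    show "(\<lambda>j. \<Sum>n<M. w n * (cmod (y j n))\<^sup>2) \<longlonglongrightarrow> (\<Sum>n<M. w n * (cmod (v n))\<^sup>2)"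
      by (intro tendsto_intros lim)
    show "\<forall>\<^sub>F j in sequentially. (\<Sum>n<M. w n * (cmod (y j n))\<^sup>2) \<le> B"
      using bnd
    proof eventually_elim
      case (elim j)
      then show ?case using partial_sum_le_weighted_sqnorm[of w "y j" M, OF w] by linarith
    qed
  qed
  then show "v \<in> weighted_l2 w" "weighted_sqnorm w v \<le> B"
    using weighted_sqnorm_le_const[of w v B, OF w] by blast+
qed

lemma weighted_l2_cauchy_limit:
  assumes w: "\<And>n. 0 \<le> w n" and x: "\<And>k. x k \<in> weighted_l2 w"
    and lim: "\<And>n. (\<lambda>k. x k n) \<longlonglongrightarrow> u n"
    and cauchy: "\<And>e. e > 0 \<Longrightarrow> \<exists>N. \<forall>i\<ge>N. \<forall>j\<ge>N. weighted_sqnorm w (vdiff (x i) (x j)) < e"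
  shows "u \<in> weighted_l2 w" "(\<lambda>k. weighted_sqnorm w (vdiff (x k) u)) \<longlonglongrightarrow> 0"
proof -
  have close: "\<exists>N. \<forall>i\<ge>N. vdiff (x i) u \<in> weighted_l2 w \<and> weighted_sqnorm w (vdiff (x i) u) \<le> e"
    if "e > 0" for e
  proof -
    obtain N where N: "\<forall>i\<ge>N. \<forall>j\<ge>N. weighted_sqnorm w (vdiff (x i) (x j)) < e"
      using cauchy[OF \<open>e > 0\<close>] by blast
    have "vdiff (x i) u \<in> weighted_l2 w \<and> weighted_sqnorm w (vdiff (x i) u) \<le> e" if "i \<ge> N" for i
    proof -
      have lim_i: "(\<lambda>j. vdiff (x i) (x j) n) \<longlonglongrightarrow> vdiff (x i) u n" for n
        unfolding vdiff_def by (intro tendsto_intros lim)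
      have "\<forall>\<^sub>F j in sequentially. vdiff (x i) (x j) \<in> weighted_l2 w
          \<and> weighted_sqnorm w (vdiff (x i) (x j)) \<le> e"
        unfolding eventually_sequentially
        using N \<open>i \<ge> N\<close> weighted_l2_diff[of w "x i", OF w x x] less_imp_le by blast
      then show ?thesis using weighted_sqnorm_fatou[of w "\<lambda>j. vdiff (x i) (x j)" "vdiff (x i) u", OF w lim_i] by blast
    qed
    then show ?thesis by blast
  qed
  obtain N where "vdiff (x N) u \<in> weighted_l2 w"
    using close[OF zero_less_one] by (meson order_refl)
  from weighted_l2_diff[of w "x N", OF w x this] show "u \<in> weighted_l2 w"
    by (simp add: vdiff_def)
  show "(\<lambda>k. weighted_sqnorm w (vdiff (x k) u)) \<longlonglongrightarrow> 0"
  proof (rule LIMSEQ_I)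
    fix r :: real assume "r > 0"
    then obtain N where N: "\<forall>i\<ge>N. vdiff (x i) u \<in> weighted_l2 w
        \<and> weighted_sqnorm w (vdiff (x i) u) \<le> r/2"
      using close[of "r/2"] by auto
    have "norm (weighted_sqnorm w (vdiff (x k) u) - 0) < r" if "k \<ge> N" for k
      using N[rule_format, OF that] \<open>r > 0\<close> weighted_sqnorm_nonneg[of w "vdiff (x k) u", OF w]
      by simp
    then show "\<exists>N. \<forall>k\<ge>N. norm (weighted_sqnorm w (vdiff (x k) u) - 0) < r" by blast
  qed
qed

lemma sqrt_weighted_sqnorm_dist:
  assumes w: "\<And>n. 0 \<le> w n" and a: "a \<in> weighted_l2 w" and b: "b \<in> weighted_l2 w"
  shows "\<bar>sqrt (weighted_sqnorm w a) - sqrt (weighted_sqnorm w b)\<bar>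
    \<le> sqrt (weighted_sqnorm w (vdiff a b))"
proof -
  have ab: "vdiff a b \<in> weighted_l2 w" and ba: "vdiff b a \<in> weighted_l2 w"
    using weighted_l2_diff[of w, OF w] a b by blast+
  have "sqrt (weighted_sqnorm w a) \<le> sqrt (weighted_sqnorm w (vdiff a b)) + sqrt (weighted_sqnorm w b)"
    using sqrt_weighted_sqnorm_triangle[OF w ab b] by (simp add: vdiff_def)
  moreover have "sqrt (weighted_sqnorm w b) \<le> sqrt (weighted_sqnorm w (vdiff b a)) + sqrt (weighted_sqnorm w a)"
    using sqrt_weighted_sqnorm_triangle[OF w ba a] by (simp add: vdiff_def)
  ultimately show ?thesis by (simp add: weighted_sqnorm_vdiff_commute[of w b a])
qed

lemma sqrt_weighted_sqnorm_tendsto: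
  assumes w: "\<And>n. 0 \<le> w n" and x: "\<And>k. x k \<in> weighted_l2 w" and u: "u \<in> weighted_l2 w"
    and lim: "(\<lambda>k. weighted_sqnorm w (vdiff (x k) u)) \<longlonglongrightarrow> 0"
  shows "(\<lambda>k. sqrt (weighted_sqnorm w (x k))) \<longlonglongrightarrow> sqrt (weighted_sqnorm w u)"
proof -
  have "(\<lambda>k. sqrt (weighted_sqnorm w (x k)) - sqrt (weighted_sqnorm w u)) \<longlonglongrightarrow> 0"
  proof (rule Lim_null_comparison)
    show "\<forall>\<^sub>F k in sequentially. norm (sqrt (weighted_sqnorm w (x k)) - sqrt (weighted_sqnorm w u))
        \<le> sqrt (weighted_sqnorm w (vdiff (x k) u))"
      using sqrt_weighted_sqnorm_dist[OF w x u] by simp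
    show "(\<lambda>k. sqrt (weighted_sqnorm w (vdiff (x k) u))) \<longlonglongrightarrow> 0"
      using tendsto_real_sqrt[OF lim] by simp
  qed
  then show ?thesis by (rule LIM_zero_cancel)
qed

section \<open>Diagonal operators\<close>

definition diagonal_op :: "op \<Rightarrow> (nat \<Rightarrow> real) \<Rightarrow> bool" where
  "diagonal_op T d \<longleftrightarrow> op_dom T = diag_dom d \<and> (\<forall>u\<in>diag_dom d. op_app T u = diag_mult d u)"

lemma diag_dom_subset_weighted_l2:
  assumes d: "\<And>n. 0 \<le> d n" and u: "u \<in> diag_dom d"
  shows "u \<in> weighted_l2 d"
proof (rule weighted_l2_bound2[of _ 1 "\<lambda>_. 1" 1 "\<lambda>n. (d n)\<^sup>2", OF d])
  show "d n \<le> 1 * 1 + 1 * (d n)\<^sup>2" for n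
    using sum_squares_bound[of 1 "d n"] d[of n] by simp
  show "u \<in> weighted_l2 (\<lambda>_. 1)" "u \<in> weighted_l2 (\<lambda>n. (d n)\<^sup>2)"
    using u unfolding diag_dom_def diag_mult_in_l2 weighted_l2_one by auto
qed

lemma inner2_diag_mult: "inner2 (diag_mult d u) v = inner2 u (diag_mult d v)"
  unfolding inner2_def diag_mult_def by (simp add: mult.commute mult.left_commute)

lemma inner2_diag_mult_fock_vec: "inner2 (diag_mult d (fock_vec k)) v = diag_mult d v k"
  using inner2_fock_vec[of k "diag_mult d v"] by (simp add: inner2_diag_mult)

lemma diagonal_op_adjoint_iff:
  assumes T: "diagonal_op T d" and v: "v \<in> l2"
  shows "(w \<in> l2 \<and> (\<forall>u\<in>op_dom T. inner2 (op_app T u) v = inner2 u w))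
    \<longleftrightarrow> v \<in> diag_dom d \<and> w = diag_mult d v"
proof
  assume w: "w \<in> l2 \<and> (\<forall>u\<in>op_dom T. inner2 (op_app T u) v = inner2 u w)"
  have "w k = diag_mult d v k" for k
    using w T fock_vec_in_diag_dom[of k d] inner2_diag_mult_fock_vec[of d k v] inner2_fock_vec[of k w]
    unfolding diagonal_op_def by auto
  then have "w = diag_mult d v" by (rule ext)
  then show "v \<in> diag_dom d \<and> w = diag_mult d v"
    using w v unfolding diag_dom_def by auto
next
  assume "v \<in> diag_dom d \<and> w = diag_mult d v"
  then show "w \<in> l2 \<and> (\<forall>u\<in>op_dom T. inner2 (op_app T u) v = inner2 u w)"
    using T inner2_diag_mult unfolding diagonal_op_def diag_dom_def by auto
qed

lemma selfadjoint_diagonal_op: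
  assumes T: "diagonal_op T d" shows "selfadjoint T"
  unfolding selfadjoint_def op_eq_def
proof (intro conjI ballI)
  show "dense_l2 (op_dom T)" using T dense_diag_dom unfolding diagonal_op_def by simp
  have adj: "(w \<in> l2 \<and> (\<forall>u\<in>op_dom T. inner2 (op_app T u) v = inner2 u w))
      \<longleftrightarrow> v \<in> diag_dom d \<and> w = diag_mult d v" if "v \<in> l2" for v w
    using diagonal_op_adjoint_iff[OF T that] .
  show dom: "op_dom (adjoint T) = op_dom T"
    using T adj unfolding adjoint_def diagonal_op_def diag_dom_def by auto
  fix v assume "v \<in> op_dom (adjoint T)"
  then have v: "v \<in> diag_dom d" using dom T unfolding diagonal_op_def by simp
  then have "v \<in> l2" unfolding diag_dom_def by simp
  have "op_app (adjoint T) v = diag_mult d v" unfolding adjoint_def snd_conv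
    using adj[OF \<open>v \<in> l2\<close>] v by (intro the_equality) auto
  then show "op_app (adjoint T) v = op_app T v" using T v unfolding diagonal_op_def by simp
qed

lemma diagonal_op_graph_limit:
  assumes T: "diagonal_op T d"
    and x: "\<forall>k. x k \<in> op_dom T" and xu: "l2conv x u" and Txw: "l2conv (\<lambda>k. op_app T (x k)) w"
  shows "w = diag_mult d u"
proof (rule ext)
  fix n
  have "(\<lambda>k. op_app T (x k) n) = (\<lambda>k. complex_of_real (d n) * x k n)"
    using T x unfolding diagonal_op_def by (simp add: diag_mult_def)
  then have "(\<lambda>k. op_app T (x k) n) \<longlonglongrightarrow> diag_mult d u n"
    unfolding diag_mult_def by (simp add: tendsto_mult_left l2conv_coordinate[OF xu])
  then show "w n = diag_mult d u n" using l2conv_coordinate[OF Txw] LIMSEQ_unique by blast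
qed

lemma diagonal_op_closure:
  assumes T: "diagonal_op T d" shows "diagonal_op (op_closure T) d"
proof -
  have const: "(\<forall>k. u \<in> op_dom T) \<and> l2conv (\<lambda>k. u) u \<and> l2conv (\<lambda>k. op_app T u) (diag_mult d u)"
    if "u \<in> diag_dom d" for u
    using that T l2conv_const unfolding diagonal_op_def diag_dom_def by auto
  have "u \<in> diag_dom d" if u: "u \<in> op_dom (op_closure T)" for u
  proof -
    obtain x w where x: "\<forall>k. x k \<in> op_dom T" "l2conv x u" "l2conv (\<lambda>k. op_app T (x k)) w"
      using u unfolding op_closure_def by auto
    then show ?thesis using diagonal_op_graph_limit[OF T x] l2conv_l2 unfolding diag_dom_def by blast
  qed
  moreover have "u \<in> op_dom (op_closure T)" if "u \<in> diag_dom d" for u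
    using const[OF that] unfolding op_closure_def fst_conv
    by (intro CollectI exI[of _ "\<lambda>k. u"] exI[of _ "diag_mult d u"]) simp
  moreover have "op_app (op_closure T) u = diag_mult d u" if "u \<in> diag_dom d" for u
    unfolding op_closure_def snd_conv
  proof (rule the_equality)
    show "\<exists>x. (\<forall>k. x k \<in> op_dom T) \<and> l2conv x u \<and> l2conv (\<lambda>k. op_app T (x k)) (diag_mult d u)"
      using const[OF that] by (intro exI[of _ "\<lambda>k. u"]) simp
    show "w = diag_mult d u"
      if "\<exists>x. (\<forall>k. x k \<in> op_dom T) \<and> l2conv x u \<and> l2conv (\<lambda>k. op_app T (x k)) w" for w
      using that diagonal_op_graph_limit[OF T] by blast
  qed
  ultimately show ?thesis unfolding diagonal_op_def by blast
qed

lemma diagonal_op_sum_singleton: "diagonal_op T d \<Longrightarrow> diagonal_op (op_sum [T]) d"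
  unfolding diagonal_op_def op_sum_def by (auto simp: diag_dom_def)

lemma re_inner2_diag_mult:
  assumes "summable (\<lambda>n. a n * b n * (cmod (u n))\<^sup>2)"
  shows "Re (inner2 (diag_mult a u) (diag_mult b u)) = (\<Sum>n. a n * b n * (cmod (u n))\<^sup>2)"
proof -
  have "cnj (diag_mult a u n) * diag_mult b u n = complex_of_real (a n * b n * (cmod (u n))\<^sup>2)" for n
  proof -
    have "cnj (diag_mult a u n) * diag_mult b u n = complex_of_real (a n * b n) * (u n * cnj (u n))"
      by (simp add: diag_mult_def)
    also have "\<dots> = complex_of_real (a n * b n * (cmod (u n))\<^sup>2)"
      by (simp only: complex_norm_square[symmetric] of_real_mult)
    finally show ?thesis .
  qed
  then have "inner2 (diag_mult a u) (diag_mult b u) = (\<Sum>n. complex_of_real (a n * b n * (cmod (u n))\<^sup>2))"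
    unfolding inner2_def by simp
  also have "\<dots> = complex_of_real (\<Sum>n. a n * b n * (cmod (u n))\<^sup>2)"
    by (rule suminf_of_real[OF assms, symmetric])
  finally show ?thesis by simp
qed

lemma diagonal_op_add_id:
  assumes Q: "diagonal_op Q q" and q: "\<And>n. 0 \<le> q n"
  shows "diagonal_op (op_add op_id Q) (\<lambda>n. 1 + q n)"
proof -
  have "u \<in> weighted_l2 (\<lambda>n. (1 + q n)\<^sup>2) \<longleftrightarrow> u \<in> weighted_l2 (\<lambda>n. (q n)\<^sup>2)" if "u \<in> l2" for u
  proof
    show "u \<in> weighted_l2 (\<lambda>n. (q n)\<^sup>2)" if "u \<in> weighted_l2 (\<lambda>n. (1 + q n)\<^sup>2)"
    proof (rule weighted_l2_bound[of _ 1 "\<lambda>n. (1 + q n)\<^sup>2", OF _ _ that])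
      show "(q n)\<^sup>2 \<le> 1 * (1 + q n)\<^sup>2" for n using q[of n] by (simp add: power_mono)
    qed simp
    show "u \<in> weighted_l2 (\<lambda>n. (1 + q n)\<^sup>2)" if "u \<in> weighted_l2 (\<lambda>n. (q n)\<^sup>2)"
    proof (rule weighted_l2_bound2[of _ 2 "\<lambda>_. 1" 2 "\<lambda>n. (q n)\<^sup>2", OF _ _ _ that])
      show "(1 + q n)\<^sup>2 \<le> 2 * 1 + 2 * (q n)\<^sup>2" for n
        using sum_squares_bound[of 1 "q n"] by (simp add: power2_sum)
      show "u \<in> weighted_l2 (\<lambda>_. 1)" using \<open>u \<in> l2\<close> weighted_l2_one by simp
    qed simp
  qed
  then have dom: "diag_dom (\<lambda>n. 1 + q n) = diag_dom q"
    unfolding diag_dom_def diag_mult_in_l2 by blast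
  have "op_app (op_add op_id Q) u = diag_mult (\<lambda>n. 1 + q n) u" if "u \<in> diag_dom q" for u
    using Q that unfolding diagonal_op_def
    by (simp add: op_add_def op_id_def diag_mult_def fun_eq_iff distrib_right)
  moreover have "op_dom (op_add op_id Q) = diag_dom q"
    using Q unfolding diagonal_op_def op_add_def op_id_def diag_dom_def by auto
  ultimately show ?thesis unfolding diagonal_op_def dom by simp
qed

section \<open>The scale of a diagonal operator bounded below by the identity\<close>

lemma op_app_opow_Suc: "op_app (opow T (Suc j)) u = op_app T (op_app (opow T j) u)"
  by (simp add: op_comp_def)

lemma op_dom_opow_Suc:
  "op_dom (opow T (Suc j)) = {u \<in> op_dom (opow T j). op_app (opow T j) u \<in> op_dom T}"
  by (simp add: op_comp_def)

locale diagonal_scale =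
  fixes Lam :: op and lam :: "nat \<Rightarrow> real"
  assumes diagonal: "diagonal_op Lam lam" and lam_ge_1: "\<And>n. 1 \<le> lam n"
begin

lemma lam_nonneg: "0 \<le> lam n"
  using lam_ge_1[of n] by simp

lemma lam_pow_nonneg: "0 \<le> lam n ^ k"
  using lam_nonneg by simp

lemma lam_pow_mono: "k \<le> k' \<Longrightarrow> lam n ^ k \<le> lam n ^ k'"
  by (rule power_increasing[OF _ lam_ge_1])

lemma weighted_l2_lam_pow_mono:
  "k \<le> k' \<Longrightarrow> u \<in> weighted_l2 (\<lambda>n. lam n ^ k') \<Longrightarrow> u \<in> weighted_l2 (\<lambda>n. lam n ^ k)"
  by (rule weighted_l2_bound[of _ 1]) (use lam_pow_nonneg lam_pow_mono in auto)

lemma weighted_l2_lam_pow_l2: "u \<in> weighted_l2 (\<lambda>n. lam n ^ k) \<Longrightarrow> u \<in> l2"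
  using weighted_l2_lam_pow_mono[of 0 k u] weighted_l2_one by simp

lemma diag_dom_lam: "diag_dom lam = weighted_l2 (\<lambda>n. lam n ^ 2)"
  unfolding diag_dom_def diag_mult_in_l2 using weighted_l2_lam_pow_l2 by auto

lemma Lam_dom: "op_dom Lam = weighted_l2 (\<lambda>n. lam n ^ 2)"
  using diagonal diag_dom_lam by (simp add: diagonal_op_def)

lemma Lam_app: "u \<in> op_dom Lam \<Longrightarrow> op_app Lam u = diag_mult lam u"
  using diagonal by (simp add: diagonal_op_def)

lemma opow_Lam:
  "op_dom (opow Lam j) = weighted_l2 (\<lambda>n. lam n ^ (2 * j)) \<and>
    (\<forall>u\<in>weighted_l2 (\<lambda>n. lam n ^ (2 * j)). op_app (opow Lam j) u = diag_mult (\<lambda>n. lam n ^ j) u)"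
proof (induction j)
  case 0
  show ?case using weighted_l2_one by (simp add: op_id_def diag_mult_def)
next
  case (Suc j)
  have pow: "(\<lambda>n. lam n ^ 2 * (lam n ^ j)\<^sup>2) = (\<lambda>n. lam n ^ (2 * Suc j))"
    by (simp add: fun_eq_iff power_mult[symmetric] power_add[symmetric] mult.commute)
  have step: "diag_mult (\<lambda>n. lam n ^ j) u \<in> op_dom Lam \<longleftrightarrow> u \<in> weighted_l2 (\<lambda>n. lam n ^ (2 * Suc j))"
    for u
    unfolding Lam_dom diag_mult_in_weighted_l2 pow ..
  have "op_dom (opow Lam (Suc j)) = weighted_l2 (\<lambda>n. lam n ^ (2 * Suc j))"
    unfolding op_dom_opow_Suc using Suc.IH step weighted_l2_lam_pow_mono[of "2 * j" "2 * Suc j"]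
    by auto
  moreover have "op_app (opow Lam (Suc j)) u = diag_mult (\<lambda>n. lam n ^ Suc j) u"
    if "u \<in> weighted_l2 (\<lambda>n. lam n ^ (2 * Suc j))" for u
    using Suc.IH step[of u] that weighted_l2_lam_pow_mono[of "2 * j" "2 * Suc j" u]
    unfolding op_app_opow_Suc by (simp add: Lam_app diag_mult_diag_mult mult.commute)
  ultimately show ?case by blast
qed

lemma Lam_dom_subset_weighted_l2: "u \<in> op_dom Lam \<Longrightarrow> u \<in> weighted_l2 lam"
  using weighted_l2_lam_pow_mono[of 1 2 u] unfolding Lam_dom by simp

lemma re_inner2_Lam:
  assumes "u \<in> op_dom Lam" shows "Re (inner2 (op_app Lam u) u) = weighted_sqnorm lam u"
proof -
  have "u = diag_mult (\<lambda>_. 1) u" by (simp add: diag_mult_def)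
  then have "Re (inner2 (op_app Lam u) u) = Re (inner2 (diag_mult lam u) (diag_mult (\<lambda>_. 1) u))"
    using Lam_app[OF assms] by simp
  also have "\<dots> = weighted_sqnorm lam u"
    using re_inner2_diag_mult[of lam "\<lambda>_. 1" u] Lam_dom_subset_weighted_l2[OF assms]
    by (simp add: weighted_l2_iff weighted_sqnorm_def)
  finally show ?thesis .
qed

lemma lam_pow_double: "(lam n ^ j)\<^sup>2 = lam n ^ (2 * j)"
  by (simp add: power_mult[symmetric] mult.commute)

lemma re_inner2_opow_Lam_diag_mult:
  assumes "u \<in> weighted_l2 (\<lambda>n. lam n ^ (2 * j))" "diag_mult g u \<in> weighted_l2 (\<lambda>n. lam n ^ (2 * j))"
    and "summable (\<lambda>n. lam n ^ (2 * j) * g n * (cmod (u n))\<^sup>2)"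
  shows "Re (inner2 (op_app (opow Lam j) (diag_mult g u)) (op_app (opow Lam j) u))
    = (\<Sum>n. lam n ^ (2 * j) * g n * (cmod (u n))\<^sup>2)"
proof -
  have "lam n ^ j * g n * lam n ^ j * c = (lam n ^ j)\<^sup>2 * g n * c" for n c
    by (simp add: power2_eq_square mult_ac)
  then have eq: "(\<lambda>n. lam n ^ j * g n * lam n ^ j * (cmod (u n))\<^sup>2)
      = (\<lambda>n. lam n ^ (2 * j) * g n * (cmod (u n))\<^sup>2)"
    by (simp only: lam_pow_double)
  have "Re (inner2 (op_app (opow Lam j) (diag_mult g u)) (op_app (opow Lam j) u))
      = Re (inner2 (diag_mult (\<lambda>n. lam n ^ j * g n) u) (diag_mult (\<lambda>n. lam n ^ j) u))"
    using opow_Lam[of j] assms(1,2) by (simp add: diag_mult_diag_mult)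
  also have "\<dots> = (\<Sum>n. lam n ^ (2 * j) * g n * (cmod (u n))\<^sup>2)"
    using re_inner2_diag_mult[of "\<lambda>n. lam n ^ j * g n" "\<lambda>n. lam n ^ j" u] assms(3)
    unfolding eq by simp
  finally show ?thesis .
qed

lemma Lam_dom_diff: "u \<in> op_dom Lam \<Longrightarrow> v \<in> op_dom Lam \<Longrightarrow> vdiff u v \<in> op_dom Lam"
  unfolding Lam_dom by (rule weighted_l2_diff[OF lam_pow_nonneg])

lemma form_approx_limit:
  assumes fa: "form_approx Lam x u"
  shows "u \<in> weighted_l2 lam"
    "(\<lambda>k. sqrt (Re (inner2 (op_app Lam (x k)) (x k)))) \<longlonglongrightarrow> sqrt (weighted_sqnorm lam u)"
proof -
  have x: "x k \<in> op_dom Lam" for k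
    using fa unfolding form_approx_def by blast
  have xu: "l2conv x u"
    using fa unfolding form_approx_def by blast
  have "\<exists>N. \<forall>i\<ge>N. \<forall>j\<ge>N. weighted_sqnorm lam (vdiff (x i) (x j)) < e" if "e > 0" for e
  proof -
    have "\<forall>e>0. \<exists>N. \<forall>i\<ge>N. \<forall>j\<ge>N.
        Re (inner2 (op_app Lam (vdiff (x i) (x j))) (vdiff (x i) (x j))) < e\<^sup>2"
      using fa unfolding form_approx_def by blast
    from this[rule_format, OF real_sqrt_gt_zero[OF \<open>e > 0\<close>]] obtain N where
      "\<forall>i\<ge>N. \<forall>j\<ge>N. Re (inner2 (op_app Lam (vdiff (x i) (x j))) (vdiff (x i) (x j))) < (sqrt e)\<^sup>2"
      by blast
    then show ?thesis using re_inner2_Lam[OF Lam_dom_diff[OF x x]] \<open>e > 0\<close> by auto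
  qed
  note lim = weighted_l2_cauchy_limit[of lam x u, OF lam_nonneg Lam_dom_subset_weighted_l2[OF x]
      l2conv_coordinate[OF xu] this]
  show "u \<in> weighted_l2 lam" by (rule lim(1))
  show "(\<lambda>k. sqrt (Re (inner2 (op_app Lam (x k)) (x k)))) \<longlonglongrightarrow> sqrt (weighted_sqnorm lam u)"
    using sqrt_weighted_sqnorm_tendsto[OF lam_nonneg Lam_dom_subset_weighted_l2[OF x] lim] re_inner2_Lam[OF x]
    by simp
qed

lemma form_approx_trunc:
  assumes u: "u \<in> weighted_l2 lam" shows "form_approx Lam (\<lambda>k. trunc k u) u"
  unfolding form_approx_def
proof (intro conjI allI impI)
  have Lam_dom_eq: "op_dom Lam = diag_dom lam"
    using diagonal unfolding diagonal_op_def by simp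
  show trunc_dom: "trunc k u \<in> op_dom Lam" for k
    unfolding Lam_dom_eq by (rule trunc_in_diag_dom)
  show "l2conv (\<lambda>k. trunc k u) u"
    using u weighted_l2_lam_pow_l2[of u 1] by (simp add: trunc_l2conv)
  fix e :: real assume "e > 0"
  define f where "f n = lam n * (cmod (u n))\<^sup>2" for n
  have f: "summable f" "\<And>n. 0 \<le> f n"
    using u lam_nonneg unfolding f_def weighted_l2_iff by auto
  have tail: "summable (\<lambda>n. if n < N then 0 else f n)" for N
    by (rule summable_comparison_test'[where N=0, OF f(1)]) (simp add: f(2))
  obtain N where N: "\<bar>\<Sum>n. if n < N then 0 else f n\<bar> < e\<^sup>2"
    using LIMSEQ_D[OF tail_suminf_tendsto_zero[OF f(1)], of "e\<^sup>2"] \<open>e > 0\<close> by auto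
  have "Re (inner2 (op_app Lam (vdiff (trunc i u) (trunc j u))) (vdiff (trunc i u) (trunc j u))) < e\<^sup>2"
    if "i \<ge> N" "j \<ge> N" for i j
  proof -
    have d: "vdiff (trunc i u) (trunc j u) \<in> op_dom Lam" by (rule Lam_dom_diff[OF trunc_dom trunc_dom])
    have "weighted_sqnorm lam (vdiff (trunc i u) (trunc j u)) \<le> (\<Sum>n. if n < N then 0 else f n)"
      unfolding weighted_sqnorm_def
    proof (rule suminf_le[OF _ _ tail])
      show "lam n * (cmod (vdiff (trunc i u) (trunc j u) n))\<^sup>2 \<le> (if n < N then 0 else f n)" for n
        using that lam_nonneg[of n] unfolding vdiff_def trunc_def f_def by auto
      show "summable (\<lambda>n. lam n * (cmod (vdiff (trunc i u) (trunc j u) n))\<^sup>2)"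
        using Lam_dom_subset_weighted_l2[OF d] unfolding weighted_l2_iff .
    qed
    then show ?thesis using re_inner2_Lam[OF d] N by simp
  qed
  then show "\<exists>N. \<forall>i\<ge>N. \<forall>j\<ge>N. Re (inner2 (op_app Lam (vdiff (trunc i u) (trunc j u)))
      (vdiff (trunc i u) (trunc j u))) < e\<^sup>2"
    by blast
qed

lemma formdom_Lam: "formdom Lam = weighted_l2 lam"
  unfolding formdom_def using form_approx_limit(1) form_approx_trunc by blast

lemma formnorm_Lam:
  assumes u: "u \<in> weighted_l2 lam" shows "formnorm Lam u = sqrt (weighted_sqnorm lam u)"
  unfolding formnorm_def
proof (rule the_equality)
  show "\<forall>x. form_approx Lam x u \<longrightarrow>
      (\<lambda>k. sqrt (Re (inner2 (op_app Lam (x k)) (x k)))) \<longlonglongrightarrow> sqrt (weighted_sqnorm lam u)"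
    using form_approx_limit(2) by blast
  fix r assume "\<forall>x. form_approx Lam x u \<longrightarrow>
      (\<lambda>k. sqrt (Re (inner2 (op_app Lam (x k)) (x k)))) \<longlonglongrightarrow> r"
  from this[rule_format, OF form_approx_trunc[OF u]]
    and form_approx_limit(2)[OF form_approx_trunc[OF u]]
  show "r = sqrt (weighted_sqnorm lam u)" by (rule LIMSEQ_unique)
qed

lemma hdom_Lam: "hdom Lam k = weighted_l2 (\<lambda>n. lam n ^ k)"
proof (cases "even k")
  case True
  then obtain j where "k = 2 * j" by (rule evenE)
  then show ?thesis unfolding hdom_def using opow_Lam[of j] by simp
next
  case False
  define j where "j = k div 2"
  have k: "k = Suc (2 * j)" unfolding j_def using False by simp
  have "hdom Lam k = {u \<in> weighted_l2 (\<lambda>n. lam n ^ (2 * j)). diag_mult (\<lambda>n. lam n ^ j) u \<in> weighted_l2 lam}"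
    unfolding hdom_def formdom_Lam using False opow_Lam[of j] by (auto simp: j_def)
  also have "\<dots> = weighted_l2 (\<lambda>n. lam n ^ k)"
    unfolding diag_mult_in_weighted_l2 lam_pow_double
    using weighted_l2_lam_pow_mono[of "2 * j" k] by (auto simp: k)
  finally show ?thesis .
qed

lemma hnorm_Lam:
  assumes u: "u \<in> weighted_l2 (\<lambda>n. lam n ^ k)"
  shows "hnorm Lam k u = sqrt (weighted_sqnorm (\<lambda>n. lam n ^ k) u)"
proof (cases "even k")
  case True
  then obtain j where k: "k = 2 * j" by (rule evenE)
  then show ?thesis
    unfolding hnorm_def using opow_Lam[of j] u by (simp add: nrm_diag_mult lam_pow_double)
next
  case False
  define j where "j = k div 2"
  have k: "k = Suc (2 * j)" unfolding j_def using False by simp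
  have "u \<in> weighted_l2 (\<lambda>n. lam n ^ (2 * j))"
    using weighted_l2_lam_pow_mono[OF _ u, of "2 * j"] k by simp
  moreover have "diag_mult (\<lambda>n. lam n ^ j) u \<in> weighted_l2 lam"
    using u unfolding diag_mult_in_weighted_l2 lam_pow_double k by simp
  ultimately show ?thesis
    unfolding hnorm_def using False opow_Lam[of j]
    by (simp add: j_def[symmetric] formnorm_Lam weighted_sqnorm_diag_mult lam_pow_double k)
qed

end

section \<open>The falling factorial weights\<close>

text \<open>\<open>falling l n = n(n-1)\<cdots>(n-l+1)\<close> is the eigenvalue of \<open>a\<^sup>l\<^sup>\<dagger>a\<^sup>l\<close> on \<open>|n>\<close>;
  it vanishes for \<open>n < l\<close>.\<close>

definition falling :: "nat \<Rightarrow> nat \<Rightarrow> real" where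
  "falling l n = (\<Prod>i<l. real (n - i))"

lemma falling_nonneg: "0 \<le> falling l n"
  unfolding falling_def by (simp add: prod_nonneg)

lemma falling_eq_0: "n < l \<Longrightarrow> falling l n = 0"
  unfolding falling_def by (rule prod_zero) auto

lemma falling_Suc: "falling (Suc j) n = falling j n * real (n - j)"
  unfolding falling_def by simp

lemma falling_Suc_Suc: "falling (Suc j) (Suc n) = real (Suc n) * falling j n"
  unfolding falling_def by (subst prod.lessThan_Suc_shift) simp

lemma falling_le_power: "falling j n \<le> real n ^ j"
  unfolding falling_def using prod_mono[of "{..<j}" "\<lambda>i. real (n - i)" "\<lambda>i. real n"] by simp

lemma falling_mono: "n \<le> n' \<Longrightarrow> falling j n \<le> falling j n'"
  unfolding falling_def by (rule prod_mono) auto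

lemma falling_le_falling_Suc: "falling j n \<le> real j ^ j + falling (Suc j) n"
proof (cases "n \<le> j")
  case True
  have "falling j n \<le> real j ^ j"
    using falling_le_power[of j n] power_mono[of "real n" "real j" j] True by linarith
  then show ?thesis using falling_nonneg[of "Suc j" n] by linarith
next
  case False
  then have "falling j n \<le> falling j n * real (n - j)"
    using mult_left_mono[of 1 "real (n - j)" "falling j n"] falling_nonneg by simp
  then show ?thesis unfolding falling_Suc by (simp add: add_increasing)
qed

lemma power_le_falling: "real n ^ l \<le> 2 ^ l * falling l n + real (2 * l) ^ l"
proof (cases "2 * l \<le> n")
  case True
  have "(\<Prod>i<l. real n / 2) \<le> falling l n" unfolding falling_def
    by (rule prod_mono) (use True in auto)
  then have "real n ^ l \<le> 2 ^ l * falling l n" by (simp add: field_simps)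
  then show ?thesis by (simp add: add_increasing2)
next
  case False
  then have "real n ^ l \<le> real (2 * l) ^ l" by (intro power_mono) auto
  then show ?thesis using falling_nonneg[of l n] by (simp add: add_increasing)
qed

lemma one_plus_falling_pow_le: "(1 + falling l n) ^ k \<le> 2 ^ k * (1 + real n ^ (k * l))"
proof -
  have "(1 + falling l n) ^ k \<le> (1 + real n ^ l) ^ k"
    using falling_le_power[of l n] falling_nonneg[of l n] by (intro power_mono) auto
  also have "\<dots> \<le> 2 ^ k * (1 + (real n ^ l) ^ k)"
  proof (cases "real n ^ l \<le> 1")
    case True
    then have "(1 + real n ^ l) ^ k \<le> 2 ^ k * 1" by (simp add: power_mono)
    also have "\<dots> \<le> 2 ^ k * (1 + (real n ^ l) ^ k)" by (intro mult_left_mono) simp_all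
    finally show ?thesis .
  next
    case False
    then have "(1 + real n ^ l) ^ k \<le> (2 * real n ^ l) ^ k" by (intro power_mono) auto
    also have "\<dots> \<le> 2 ^ k * (1 + (real n ^ l) ^ k)" by (simp add: power_mult_distrib)
    finally show ?thesis .
  qed
  finally show ?thesis by (simp add: power_mult[symmetric] mult.commute)
qed

lemma power_le_one_plus_falling_pow:
  "1 + real n ^ (k * l) \<le> 2 * (2 ^ l + real (2 * l) ^ l) ^ k * (1 + falling l n) ^ k"
proof -
  define c :: real where "c = real (2 * l) ^ l"
  define K :: real where "K = 2 ^ l + c"
  have "0 \<le> c" unfolding c_def by simp
  then have "1 \<le> K" unfolding K_def using one_le_power[of "2::real" l] by linarith
  have "real n ^ l \<le> 2 ^ l * falling l n + c"
    unfolding c_def by (rule power_le_falling)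
  also have "\<dots> \<le> K * (1 + falling l n)"
    unfolding K_def using \<open>0 \<le> c\<close> falling_nonneg[of l n] by (simp add: algebra_simps)
  finally have "(real n ^ l) ^ k \<le> (K * (1 + falling l n)) ^ k"
    by (rule power_mono) simp
  then have pow: "real n ^ (k * l) \<le> K ^ k * (1 + falling l n) ^ k"
    by (simp only: power_mult_distrib mult.commute[of k l] power_mult)
  have "1 * 1 \<le> K ^ k * (1 + falling l n) ^ k"
    using \<open>1 \<le> K\<close> falling_nonneg[of l n] by (intro mult_mono) simp_all
  with pow show ?thesis unfolding K_def c_def by simp
qed

lemma weighted_l2_one_plus_falling_pow:
  "weighted_l2 (\<lambda>n. (1 + falling l n) ^ k) = {\<psi>. summable (\<lambda>m. (1 + real m ^ (k * l)) * (cmod (\<psi> m))\<^sup>2)}"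
proof -
  have "weighted_l2 (\<lambda>n. (1 + falling l n) ^ k) = weighted_l2 (\<lambda>m. 1 + real m ^ (k * l))"
  proof (intro set_eqI iffI)
    fix u assume "u \<in> weighted_l2 (\<lambda>n. (1 + falling l n) ^ k)"
    then show "u \<in> weighted_l2 (\<lambda>m. 1 + real m ^ (k * l))"
      by (rule weighted_l2_bound[of _ "2 * (2 ^ l + real (2 * l) ^ l) ^ k", rotated 2])
         (simp add: add_nonneg_nonneg, rule power_le_one_plus_falling_pow)
  next
    fix u assume "u \<in> weighted_l2 (\<lambda>m. 1 + real m ^ (k * l))"
    then show "u \<in> weighted_l2 (\<lambda>n. (1 + falling l n) ^ k)"
      by (rule weighted_l2_bound[of _ "2 ^ k", rotated 2])
         (simp_all add: one_plus_falling_pow_le falling_nonneg add_nonneg_nonneg)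
  qed
  then show ?thesis unfolding weighted_l2_def by simp
qed

section \<open>Powers of the annihilation and creation operators\<close>

lemma ann_pow_app:
  "op_app (opow ann j) u = (\<lambda>m. complex_of_real (sqrt (falling j (m + j))) * u (m + j))"
proof (induction j)
  case 0 then show ?case by (simp add: op_id_def falling_def)
next
  case (Suc j)
  show ?case
  proof (rule ext)
    fix m
    have "op_app (opow ann (Suc j)) u m = complex_of_real (sqrt (real m + 1)) *
        (complex_of_real (sqrt (falling j (Suc m + j))) * u (Suc m + j))"
      unfolding op_app_opow_Suc Suc by (simp add: ann_def)
    also have "\<dots> = complex_of_real (sqrt (falling (Suc j) (m + Suc j))) * u (m + Suc j)"
      unfolding falling_Suc by (simp add: real_sqrt_mult ac_simps)
    finally show "op_app (opow ann (Suc j)) u m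
        = complex_of_real (sqrt (falling (Suc j) (m + Suc j))) * u (m + Suc j)" .
  qed
qed

lemma cre_pow_app: "op_app (opow cre j) v =
    (\<lambda>n. if n < j then 0 else complex_of_real (sqrt (falling j n)) * v (n - j))"
proof (induction j)
  case 0 then show ?case by (simp add: op_id_def falling_def)
next
  case (Suc j)
  show ?case
  proof (rule ext)
    fix n
    show "op_app (opow cre (Suc j)) v n
        = (if n < Suc j then 0 else complex_of_real (sqrt (falling (Suc j) n)) * v (n - Suc j))"
    proof (cases n)
      case 0 then show ?thesis unfolding op_app_opow_Suc by (simp add: cre_def)
    next
      case (Suc n')
      then show ?thesis unfolding op_app_opow_Suc Suc.IH
        by (simp add: cre_def falling_Suc_Suc real_sqrt_mult)
    qed
  qed
qed

lemma cre_ann_pow_app: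
  "op_app (opow cre l) (op_app (opow ann l) u) = diag_mult (falling l) u"
proof (rule ext)
  fix n
  show "op_app (opow cre l) (op_app (opow ann l) u) n = diag_mult (falling l) u n"
  proof (cases "n < l")
    case True then show ?thesis by (simp add: cre_pow_app diag_mult_def falling_eq_0)
  next
    case False
    then have "n - l + l = n" by simp
    then show ?thesis using False falling_nonneg[of l n]
      by (simp add: cre_pow_app ann_pow_app diag_mult_def
          mult.assoc[symmetric] of_real_mult[symmetric])
  qed
qed

lemma cmod_ann_pow_sq:
  "(cmod (op_app (opow ann j) u m))\<^sup>2 = falling j (m + j) * (cmod (u (m + j)))\<^sup>2"
  unfolding ann_pow_app using falling_nonneg[of j "m + j"] by (simp add: norm_mult power_mult_distrib)

lemma ann_pow_in_l2_iff: "op_app (opow ann j) u \<in> l2 \<longleftrightarrow> u \<in> weighted_l2 (falling j)"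
  unfolding l2_def weighted_l2_iff mem_Collect_eq cmod_ann_pow_sq
  using summable_iff_shift[of "\<lambda>n. falling j n * (cmod (u n))\<^sup>2" j] by simp

lemma ann_pow_dom: "op_dom (opow ann j) = l2 \<inter> weighted_l2 (falling j)"
proof (induction j)
  case 0 then show ?case by (auto simp: op_id_def falling_def weighted_l2_one)
next
  case (Suc j)
  have "u \<in> weighted_l2 (falling j)" if "u \<in> l2" "u \<in> weighted_l2 (falling (Suc j))" for u
    by (rule weighted_l2_bound2[of "falling j" "real j ^ j" "\<lambda>_. 1" 1 "falling (Suc j)"])
       (use that falling_nonneg falling_le_falling_Suc weighted_l2_one in auto)
  moreover have "op_dom ann = {v \<in> l2. op_app ann v \<in> l2}" by (simp add: ann_def)
  ultimately show ?case unfolding op_dom_opow_Suc Suc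
    using ann_pow_in_l2_iff[of j] ann_pow_in_l2_iff[of "Suc j"] unfolding op_app_opow_Suc by blast
qed

lemma closed_ann_pow: "closed_op (opow ann l)"
  unfolding closed_op_def
proof (intro conjI allI impI)
  show "op_dom (opow ann l) \<subseteq> l2" unfolding ann_pow_dom by auto
  fix x u w
  assume "\<forall>k. x k \<in> op_dom (opow ann l)" and xu: "l2conv x u"
    and Axw: "l2conv (\<lambda>k. op_app (opow ann l) (x k)) w"
  have w: "w = op_app (opow ann l) u"
  proof (rule ext)
    fix m
    have "(\<lambda>k. op_app (opow ann l) (x k) m) \<longlonglongrightarrow> op_app (opow ann l) u m"
      unfolding ann_pow_app by (intro tendsto_mult tendsto_const l2conv_coordinate[OF xu])
    then show "w m = op_app (opow ann l) u m"
      using l2conv_coordinate[OF Axw] LIMSEQ_unique by blast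
  qed
  then show "u \<in> op_dom (opow ann l)"
    using l2conv_l2(1)[OF Axw] l2conv_l2(1)[OF xu] ann_pow_in_l2_iff ann_pow_dom by blast
  show "op_app (opow ann l) u = w" using w ..
qed

lemma inner2_ann_pow:
  assumes u: "u \<in> op_dom (opow ann l)" and cv: "op_app (opow cre l) v \<in> l2"
  shows "inner2 (op_app (opow ann l) u) v = inner2 u (op_app (opow cre l) v)"
proof -
  define f where "f n = cnj (u n) * op_app (opow cre l) v n" for n
  have "summable f" unfolding f_def
    using l2_inner_summable[OF _ cv] u ann_pow_dom by blast
  moreover have "sum f {..<l} = 0" unfolding f_def cre_pow_app by simp
  ultimately have "suminf f = (\<Sum>n. f (n + l))" using suminf_split_initial_segment[of f l] by simp
  then show ?thesis unfolding inner2_def f_def cre_pow_app ann_pow_app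
    by (simp add: mult.commute mult.left_commute)
qed

lemma inner2_ann_pow_fock_vec: "inner2 (op_app (opow ann l) (fock_vec k)) v = op_app (opow cre l) v k"
proof -
  have "(\<lambda>m. cnj (op_app (opow ann l) (fock_vec k) m) * v m)
      = (\<lambda>m. if m = k - l then op_app (opow cre l) v k else 0)"
    by (auto simp: ann_pow_app cre_pow_app fock_vec_def fun_eq_iff)
  then show ?thesis
    unfolding inner2_def
    using sums_unique[OF sums_single[of "k - l" "\<lambda>_. op_app (opow cre l) v k"]] by simp
qed

lemma adjoint_ann_pow_iff:
  assumes v: "v \<in> l2"
  shows "(w \<in> l2 \<and> (\<forall>u\<in>op_dom (opow ann l). inner2 (op_app (opow ann l) u) v = inner2 u w))
    \<longleftrightarrow> op_app (opow cre l) v \<in> l2 \<and> w = op_app (opow cre l) v"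
proof
  assume w: "w \<in> l2 \<and> (\<forall>u\<in>op_dom (opow ann l). inner2 (op_app (opow ann l) u) v = inner2 u w)"
  have "fock_vec k \<in> op_dom (opow ann l)" for k
    using fock_vec_in_diag_dom[of k] unfolding ann_pow_dom diag_dom_def
    by (auto intro: weighted_l2_finite_support[of "Suc k"] simp: fock_vec_def)
  then have "w k = op_app (opow cre l) v k" for k
    using w inner2_ann_pow_fock_vec[of l k v] inner2_fock_vec[of k w] by auto
  then have "w = op_app (opow cre l) v" by (rule ext)
  then show "op_app (opow cre l) v \<in> l2 \<and> w = op_app (opow cre l) v" using w by simp
next
  assume "op_app (opow cre l) v \<in> l2 \<and> w = op_app (opow cre l) v"
  then show "w \<in> l2 \<and> (\<forall>u\<in>op_dom (opow ann l). inner2 (op_app (opow ann l) u) v = inner2 u w)"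
    using inner2_ann_pow by auto
qed

lemma adjoint_ann_pow:
  "op_dom (adjoint (opow ann l)) = {v \<in> l2. op_app (opow cre l) v \<in> l2}"
  "v \<in> op_dom (adjoint (opow ann l)) \<Longrightarrow> op_app (adjoint (opow ann l)) v = op_app (opow cre l) v"
proof -
  have "(\<exists>w\<in>l2. \<forall>u\<in>op_dom (opow ann l). inner2 (op_app (opow ann l) u) v = inner2 u w)
      \<longleftrightarrow> op_app (opow cre l) v \<in> l2" if "v \<in> l2" for v
    using adjoint_ann_pow_iff[OF that, where l=l] by blast
  then show dom: "op_dom (adjoint (opow ann l)) = {v \<in> l2. op_app (opow cre l) v \<in> l2}"
    unfolding adjoint_def by auto
  assume "v \<in> op_dom (adjoint (opow ann l))"
  then show "op_app (adjoint (opow ann l)) v = op_app (opow cre l) v"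
    using adjoint_ann_pow_iff[of v _ l] unfolding dom adjoint_def snd_conv
    by (intro the_equality) auto
qed

lemma diagonal_op_adjoint_ann_pow_comp:
  "diagonal_op (op_comp (adjoint (opow ann l)) (opow ann l)) (falling l)"
  unfolding diagonal_op_def
proof
  have "u \<in> weighted_l2 (falling l)" if "u \<in> diag_dom (falling l)" for u
    using diag_dom_subset_weighted_l2[OF falling_nonneg that] .
  then show dom: "op_dom (op_comp (adjoint (opow ann l)) (opow ann l)) = diag_dom (falling l)"
    unfolding op_comp_def adjoint_ann_pow fst_conv ann_pow_dom diag_dom_def
    using ann_pow_in_l2_iff[of l] cre_ann_pow_app[of l] by auto
  show "\<forall>u\<in>diag_dom (falling l).
      op_app (op_comp (adjoint (opow ann l)) (opow ann l)) u = diag_mult (falling l) u"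
  proof
    fix u assume "u \<in> diag_dom (falling l)"
    then have "op_app (opow ann l) u \<in> op_dom (adjoint (opow ann l))"
      unfolding dom[symmetric] by (simp add: op_comp_def)
    then show "op_app (op_comp (adjoint (opow ann l)) (opow ann l)) u = diag_mult (falling l) u"
      using adjoint_ann_pow(2) cre_ann_pow_app[of l] by (simp add: op_comp_def)
  qed
qed

lemma ann_pow_weighted_l2:
  fixes w :: "nat \<Rightarrow> real"
  assumes w0: "\<And>n. 0 \<le> w n" and mono: "mono w"
    and u: "u \<in> weighted_l2 (\<lambda>n. w n * falling l n)"
  shows "op_app (opow ann l) u \<in> weighted_l2 w"
    "weighted_sqnorm w (op_app (opow ann l) u) \<le> weighted_sqnorm (\<lambda>n. w n * falling l n) u"
proof -
  define f where "f n = w n * falling l n * (cmod (u n))\<^sup>2" for n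
  have f: "summable f" "\<And>n. 0 \<le> f n"
    using u w0 falling_nonneg unfolding f_def weighted_l2_iff by auto
  have shifted: "summable (\<lambda>j. f (j + l))" using f(1) by simp
  have le: "w j * (cmod (op_app (opow ann l) u j))\<^sup>2 \<le> f (j + l)" for j
  proof -
    have "w j * (cmod (op_app (opow ann l) u j))\<^sup>2 = w j * (falling l (j + l) * (cmod (u (j + l)))\<^sup>2)"
      unfolding cmod_ann_pow_sq ..
    also have "\<dots> \<le> w (j + l) * (falling l (j + l) * (cmod (u (j + l)))\<^sup>2)"
      using monoD[OF mono, of j "j + l"] falling_nonneg by (intro mult_right_mono) auto
    finally show ?thesis unfolding f_def by (simp add: mult.assoc)
  qed
  have sum_Au: "summable (\<lambda>j. w j * (cmod (op_app (opow ann l) u j))\<^sup>2)"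
    by (rule summable_comparison_test'[OF shifted, where N=0]) (use le w0 in auto)
  then show "op_app (opow ann l) u \<in> weighted_l2 w" unfolding weighted_l2_iff .
  have "weighted_sqnorm w (op_app (opow ann l) u) \<le> (\<Sum>j. f (j + l))"
    unfolding weighted_sqnorm_def by (rule suminf_le[OF le sum_Au shifted])
  also have "\<dots> = suminf f - sum f {..<l}" by (rule suminf_minus_initial_segment[OF f(1)])
  also have "\<dots> \<le> suminf f" using sum_nonneg[of "{..<l}" f] f(2) by simp
  finally show "weighted_sqnorm w (op_app (opow ann l) u) \<le> weighted_sqnorm (\<lambda>n. w n * falling l n) u"
    unfolding f_def weighted_sqnorm_def .
qed

section \<open>The dissipation estimate\<close>

locale falling_damping =
  fixes l :: nat and Q :: op
  assumes Q_diagonal: "diagonal_op Q (falling l)"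
begin

sublocale diagonal_scale "op_add op_id Q" "\<lambda>n. 1 + falling l n"
  using diagonal_op_add_id[OF Q_diagonal falling_nonneg] falling_nonneg
  by unfold_locales auto

abbreviation Lam :: op where "Lam \<equiv> op_add op_id Q"

abbreviation eig :: "nat \<Rightarrow> real" where "eig n \<equiv> 1 + falling l n"

lemma mono_eig_pow: "mono (\<lambda>n. eig n ^ m)"
  using falling_nonneg falling_mono by (intro monoI power_mono) auto

lemma weighted_l2_falling_factor:
  assumes "u \<in> weighted_l2 (\<lambda>n. eig n ^ (m + 1))"
  shows "u \<in> weighted_l2 (\<lambda>n. eig n ^ m * falling l n)"
    "weighted_sqnorm (\<lambda>n. eig n ^ m * falling l n) u
      \<le> weighted_sqnorm (\<lambda>n. eig n ^ (m + 1)) u"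
proof -
  have le: "eig n ^ m * falling l n \<le> eig n ^ (m + 1)" for n
    using falling_nonneg[of l n] by (simp add: mult_left_mono)
  show u: "u \<in> weighted_l2 (\<lambda>n. eig n ^ m * falling l n)"
    by (rule weighted_l2_bound[of _ 1, OF _ _ assms]) (use le falling_nonneg in simp_all)
  show "weighted_sqnorm (\<lambda>n. eig n ^ m * falling l n) u
      \<le> weighted_sqnorm (\<lambda>n. eig n ^ (m + 1)) u"
    by (rule weighted_sqnorm_mono[OF le u assms])
qed

lemma bounded_ann_pow: "bounded_between Lam (m + 1) m (opow ann l)"
  unfolding bounded_between_def hdom_Lam
proof (intro conjI ballI exI[of _ 1] subsetI)
  fix u assume u: "u \<in> weighted_l2 (\<lambda>n. eig n ^ (m + 1))"
  note shift = ann_pow_weighted_l2[OF lam_pow_nonneg mono_eig_pow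
      weighted_l2_falling_factor(1)[OF u]]
  have "falling l n \<le> 1 * (eig n ^ m * falling l n)" for n
  proof -
    have "1 \<le> eig n ^ m" using falling_nonneg[of l n] by simp
    from mult_right_mono[OF this falling_nonneg] show ?thesis by simp
  qed
  then have "u \<in> weighted_l2 (falling l)"
    by (rule weighted_l2_bound[OF falling_nonneg _ weighted_l2_falling_factor(1)[OF u]])
  then show "u \<in> op_dom (opow ann l)"
    unfolding ann_pow_dom using weighted_l2_lam_pow_l2[OF u] by blast
  show "op_app (opow ann l) u \<in> weighted_l2 (\<lambda>n. eig n ^ m)" by (rule shift(1))
  have "hnorm Lam m (op_app (opow ann l) u)
      \<le> sqrt (weighted_sqnorm (\<lambda>n. eig n ^ m * falling l n) u)"
    using shift by (simp add: hnorm_Lam)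
  also have "\<dots> \<le> hnorm Lam (m + 1) u"
    using weighted_l2_falling_factor(2)[OF u] u by (simp add: hnorm_Lam)
  finally show "hnorm Lam m (op_app (opow ann l) u) \<le> 1 * hnorm Lam (m + 1) u"
    by simp
qed

lemma hdom_2_eq: "hdom Lam 2 = diag_dom (falling l)"
proof -
  have "hdom Lam 2 = op_dom Lam" using hdom_Lam[of 2] Lam_dom by simp
  also have "\<dots> = diag_dom (falling l)"
    using Q_diagonal unfolding diagonal_op_def op_add_def op_id_def by (auto simp: diag_dom_def)
  finally show ?thesis .
qed

lemma G_app:
  "u \<in> op_dom Q \<Longrightarrow> op_app (op_scale (-1/2) Q) u = diag_mult (\<lambda>n. - falling l n / 2) u"
  using Q_diagonal unfolding diagonal_op_def op_scale_def by (simp add: diag_mult_def)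

lemma G_weighted_l2:
  assumes "u \<in> weighted_l2 (\<lambda>n. eig n ^ (k + 2))"
  shows "diag_mult (\<lambda>n. - falling l n / 2) u \<in> weighted_l2 (\<lambda>n. eig n ^ k)"
  unfolding diag_mult_in_weighted_l2
proof (rule weighted_l2_bound[of _ 1, OF _ _ assms])
  show "eig n ^ k * (- falling l n / 2)\<^sup>2 \<le> 1 * eig n ^ (k + 2)" for n
  proof -
    have "(falling l n)\<^sup>2 \<le> (eig n)\<^sup>2"
      using falling_nonneg[of l n] by (intro power_mono) simp_all
    moreover have "(- falling l n / 2)\<^sup>2 = (falling l n)\<^sup>2 / 4"
      by (simp add: power_divide)
    ultimately have "(- falling l n / 2)\<^sup>2 \<le> (eig n)\<^sup>2"
      using zero_le_power2[of "falling l n"] by linarith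
    from mult_left_mono[OF this lam_pow_nonneg[of n k]] show ?thesis
      by (simp add: power_add power2_eq_square mult_ac)
  qed
qed (simp add: lam_pow_nonneg)

lemma damping_term:
  assumes u: "u \<in> weighted_l2 (\<lambda>n. eig n ^ 6)"
  shows "2 * Re (inner2 (op_app (opow Lam 2) (op_app (op_scale (-1/2) Q) u)) (op_app (opow Lam 2) u))
    = - weighted_sqnorm (\<lambda>n. eig n ^ 4 * falling l n) u"
proof -
  have u4: "u \<in> weighted_l2 (\<lambda>n. eig n ^ 4 * falling l n)"
    using weighted_l2_falling_factor(1)[of u 4] weighted_l2_lam_pow_mono[of 5 6 u] u by simp
  have "u \<in> op_dom Q"
    using weighted_l2_lam_pow_mono[of 2 6 u] u Lam_dom unfolding op_add_def by auto
  moreover have "u \<in> weighted_l2 (\<lambda>n. eig n ^ (2 * 2))"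
    using weighted_l2_lam_pow_mono[of 4 6 u] u by simp
  moreover have "diag_mult (\<lambda>n. - falling l n / 2) u \<in> weighted_l2 (\<lambda>n. eig n ^ (2 * 2))"
    using G_weighted_l2[of u 4] u by simp
  moreover have "summable (\<lambda>n. eig n ^ (2 * 2) * (- falling l n / 2) * (cmod (u n))\<^sup>2)"
  proof -
    have eq: "(\<lambda>n. eig n ^ (2 * 2) * (- falling l n / 2) * (cmod (u n))\<^sup>2)
        = (\<lambda>n. - 1 / 2 * (eig n ^ 4 * falling l n * (cmod (u n))\<^sup>2))"
      by (simp add: fun_eq_iff)
    show ?thesis unfolding eq using u4 unfolding weighted_l2_iff by (rule summable_mult)
  qed
  ultimately have "Re (inner2 (op_app (opow Lam 2) (op_app (op_scale (-1/2) Q) u)) (op_app (opow Lam 2) u))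
      = (\<Sum>n. - 1 / 2 * (eig n ^ 4 * falling l n * (cmod (u n))\<^sup>2))"
    using re_inner2_opow_Lam_diag_mult[of u 2] G_app by (simp add: algebra_simps)
  also have "\<dots> = - 1 / 2 * weighted_sqnorm (\<lambda>n. eig n ^ 4 * falling l n) u"
    using u4 unfolding weighted_sqnorm_def weighted_l2_iff by (rule suminf_mult)
  finally show ?thesis by simp
qed

lemma jump_term:
  assumes u: "u \<in> weighted_l2 (\<lambda>n. eig n ^ 6)"
  shows "(nrm (op_app (opow Lam 2) (op_app (opow ann l) u)))\<^sup>2
    \<le> weighted_sqnorm (\<lambda>n. eig n ^ 4 * falling l n) u"
proof -
  have "u \<in> weighted_l2 (\<lambda>n. eig n ^ 4 * falling l n)"
    using weighted_l2_falling_factor(1)[of u 4] weighted_l2_lam_pow_mono[of 5 6 u] u by simp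
  note shift = ann_pow_weighted_l2[OF lam_pow_nonneg mono_eig_pow this]
  then have "(nrm (op_app (opow Lam 2) (op_app (opow ann l) u)))\<^sup>2
      = weighted_sqnorm (\<lambda>n. eig n ^ 4) (op_app (opow ann l) u)"
    using opow_Lam[of 2] weighted_sqnorm_nonneg[OF lam_pow_nonneg shift(1)]
    by (simp add: nrm_diag_mult lam_pow_double)
  with shift(2) show ?thesis by simp
qed

lemma dissipation:
  assumes "u \<in> hdom Lam 6"
  shows "2 * Re (inner2 (op_app (opow Lam 2) (op_app (op_scale (-1/2) Q) u)) (op_app (opow Lam 2) u))
    + (nrm (op_app (opow Lam 2) (op_app (opow ann l) u)))\<^sup>2 \<le> 0"
  using damping_term jump_term assms unfolding hdom_Lam by fastforce

end

theorem mainTheorem12: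
  fixes l :: nat
  assumes "l \<ge> 1"
  shows "let L = opow ann l;
             Q = op_closure (op_comp (adjoint L) L);
             G = op_scale (-1/2) Q;
             Lam = op_add op_id Q
         in (\<forall>k. hdom Lam k = {\<psi>. summable (\<lambda>m. (1 + real m ^ (k * l)) * (cmod (\<psi> m))\<^sup>2)})
          \<and> selfadjoint (hdom Lam 2, op_app (op_comp (opow cre l) (opow ann l)))
          \<and> (\<forall>m. bounded_between Lam (m + 1) m L)
          \<and> (\<forall>u\<in>hdom Lam 6.
               2 * Re (inner2 (op_app (opow Lam 2) (op_app G u)) (op_app (opow Lam 2) u))
               + (nrm (op_app (opow Lam 2) (op_app L u)))\<^sup>2 \<le> 0)
          \<and> assumptionA [L] 0"
proof -
  define L where "L = opow ann l"
  define LL where "LL = op_sum [op_comp (adjoint L) L]"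
  have LL: "diagonal_op LL (falling l)"
    unfolding LL_def L_def by (intro diagonal_op_sum_singleton diagonal_op_adjoint_ann_pow_comp)
  interpret A: falling_damping l "op_closure (op_comp (adjoint L) L)"
    unfolding L_def by unfold_locales (rule diagonal_op_closure[OF diagonal_op_adjoint_ann_pow_comp])
  interpret B: falling_damping l "op_closure LL"
    by unfold_locales (rule diagonal_op_closure[OF LL])
  have "selfadjoint LL" "selfadjoint (op_closure LL)"
    using selfadjoint_diagonal_op diagonal_op_closure LL by blast+
  then have "assumptionA [L] 0"
    using closed_ann_pow[of l] B.bounded_ann_pow[of 4] B.dissipation
    unfolding assumptionA_def Let_def ess_selfadjoint_def selfadjoint_def L_def[symmetric]
    by (simp add: LL_def[symmetric])
  moreover have "selfadjoint (hdom A.Lam 2, op_app (op_comp (opow cre l) L))"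
    by (rule selfadjoint_diagonal_op[where d="falling l"])
      (simp add: diagonal_op_def A.hdom_2_eq op_comp_def[of "opow cre l"]
        cre_ann_pow_app[of l, folded L_def])
  ultimately show ?thesis
    using A.bounded_ann_pow A.dissipation
    unfolding Let_def L_def[symmetric] A.hdom_Lam weighted_l2_one_plus_falling_pow
    by simp
qed

end
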